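(* For all programs $p$ and $q$, environments $\sigma,\sigma'$ and time instants $t,t',s\in\mathbb{R}_{\ge0}$: if $(p,\sigma,t)\to(q,\sigma',t')$ then $(p,\sigma,t+s)\to(q,\sigma',t'+s)$; and if $(p,\sigma,t)\to(\mathit{skip},\sigma',t')$ then $(p,\sigma,t+s)\to(\mathit{skip},\sigma',t'+s)$.
   Context: Syntax. Fix variables $\mathcal{X}=\{x_1,\dots,x_n\}$. Linear terms: $u::= r\mid r\cdot x\mid u_1+u_2$ ($r\in\mathbb{R}$, $x\in\mathcal{X}$). Atomic programs: $x:=u$ and $\bar x'=\bar u\ \mathtt{for}\ u$. Programs: $p::= a\mid p;q\mid \mathtt{if}\ b\ \mathtt{then}\ p\ \mathtt{else}\ q\mid \mathtt{while}\ b\ \mathtt{do}\ p$, $b$ in the free Boolean algebra generated by atoms $u_1\le u_2$, $u_1\ge u_2$. Environments $\sigma\colon\mathcal{X}\to\mathbb{R}$; $u\sigma$, $b\sigma$ evaluation; $\sigma\triangledown[\bar v/\bar x]$ update; $\phi_\sigma$ the solution of $\bar x'=\bar u$ with initial value $(\sigma(x_i))_i$. Small-step rules on triples $(p,\sigma,t)$ ($p$ a program or $\mathit{skip}/\mathit{stop}$, $t\ge0$): $(x:=u,\sigma,t)\to(\mathit{skip},\sigma\triangledown[u\sigma/x],t)$; $(\bar x'=\bar u\ \mathtt{for}\ u,\sigma,t)\to(\mathit{stop},\sigma\triangledown[\phi_\sigma(t)/\bar x],0)$ if $t<u\sigma$; $(\bar x'=\bar u\ \mathtt{for}\ u,\sigma,t)\to(\mathit{skip},\sigma\triangledown[\phi_\sigma(u\sigma)/\bar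 x],t-u\sigma)$ if $t\ge u\sigma$; $(\mathtt{if}\ b\ \mathtt{then}\ p\ \mathtt{else}\ q,\sigma,t)\to(p,\sigma,t)$ if $b\sigma=\top$, $\to(q,\sigma,t)$ if $b\sigma=\bot$; $(\mathtt{while}\ b\ \mathtt{do}\ p,\sigma,t)\to(p;\mathtt{while}\ b\ \mathtt{do}\ p,\sigma,t)$ if $b\sigma=\top$, $\to(\mathit{skip},\sigma,t)$ if $b\sigma=\bot$; from $(p,\sigma,t)\to(\mathit{stop},\sigma',t')$ infer $(p;q,\sigma,t)\to(\mathit{stop},\sigma',t')$; from $(p,\sigma,t)\to(\mathit{skip},\sigma',t')$ infer $(p;q,\sigma,t)\to(q,\sigma',t')$; from $(p,\sigma,t)\to(p',\sigma',t')$ with $p'\notin\{\mathit{skip},\mathit{stop}\}$ infer $(p;q,\sigma,t)\to(p';q,\sigma',t')$. *)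

theory Defs
  imports Complex_Main
begin

text \<open>Variables are the elements of a finite type 'v (the fixed set x_1..x_n).
  Environments are total maps from variables to reals.\<close>

type_synonym 'v env = "'v \<Rightarrow> real"

datatype 'v lterm = LConst real | LMul real 'v | LPlus "'v lterm" "'v lterm"

fun leval :: "'v lterm \<Rightarrow> 'v env \<Rightarrow> real" where
  "leval (LConst r) \<sigma> = r"
| "leval (LMul r x) \<sigma> = r * \<sigma> x"
| "leval (LPlus u1 u2) \<sigma> = leval u1 \<sigma> + leval u2 \<sigma>"

datatype 'v bexp = BTrue | BFalse | BLe "'v lterm" "'v lterm" | BGe "'v lterm" "'v lterm"
  | BNot "'v bexp" | BAnd "'v bexp" "'v bexp" | BOr "'v bexp" "'v bexp"

fun beval :: "'v bexp \<Rightarrow> 'v env \<Rightarrow> bool" where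
  "beval BTrue \<sigma> = True"
| "beval BFalse \<sigma> = False"
| "beval (BLe u1 u2) \<sigma> = (leval u1 \<sigma> \<le> leval u2 \<sigma>)"
| "beval (BGe u1 u2) \<sigma> = (leval u1 \<sigma> \<ge> leval u2 \<sigma>)"
| "beval (BNot b) \<sigma> = (\<not> beval b \<sigma>)"
| "beval (BAnd b1 b2) \<sigma> = (beval b1 \<sigma> \<and> beval b2 \<sigma>)"
| "beval (BOr b1 b2) \<sigma> = (beval b1 \<sigma> \<or> beval b2 \<sigma>)"

text \<open>Programs. Ode F u stands for  x_1' = F x_1, ..., x_n' = F x_n  for u.\<close>
datatype 'v prog =
    Assign 'v "'v lterm"
  | Ode "'v \<Rightarrow> 'v lterm" "'v lterm"
  | Seq "'v prog" "'v prog"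
  | If "'v bexp" "'v prog" "'v prog"
  | While "'v bexp" "'v prog"

datatype 'v cmd = Prog "'v prog" | Skip | Stop

definition ode_sol :: "('v \<Rightarrow> 'v lterm) \<Rightarrow> 'v env \<Rightarrow> real \<Rightarrow> 'v env" where
  "ode_sol F \<sigma> = (THE \<phi>. \<phi> 0 = \<sigma> \<and>
     (\<forall>i \<tau>. ((\<lambda>r. \<phi> r i) has_real_derivative leval (F i) (\<phi> \<tau>)) (at \<tau>)))"

inductive step :: "'v cmd \<Rightarrow> 'v env \<Rightarrow> real \<Rightarrow> 'v cmd \<Rightarrow> 'v env \<Rightarrow> real \<Rightarrow> bool" where
  assign: "step (Prog (Assign x u)) \<sigma> t Skip (\<sigma>(x := leval u \<sigma>)) t"
| ode_stop: "t < leval u \<sigma> \<Longrightarrow> step (Prog (Ode F u)) \<sigma> t Stop (ode_sol F \<sigma> t) 0"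
| ode_skip: "t \<ge> leval u \<sigma> \<Longrightarrow>
     step (Prog (Ode F u)) \<sigma> t Skip (ode_sol F \<sigma> (leval u \<sigma>)) (t - leval u \<sigma>)"
| if_true: "beval b \<sigma> \<Longrightarrow> step (Prog (If b p q)) \<sigma> t (Prog p) \<sigma> t"
| if_false: "\<not> beval b \<sigma> \<Longrightarrow> step (Prog (If b p q)) \<sigma> t (Prog q) \<sigma> t"
| while_true: "beval b \<sigma> \<Longrightarrow> step (Prog (While b p)) \<sigma> t (Prog (Seq p (While b p))) \<sigma> t"
| while_false: "\<not> beval b \<sigma> \<Longrightarrow> step (Prog (While b p)) \<sigma> t Skip \<sigma> t"
| seq_stop: "step (Prog p) \<sigma> t Stop \<sigma>' t' \<Longrightarrow> step (Prog (Seq p q)) \<sigma> t Stop \<sigma>' t'"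
| seq_skip: "step (Prog p) \<sigma> t Skip \<sigma>' t' \<Longrightarrow> step (Prog (Seq p q)) \<sigma> t (Prog q) \<sigma>' t'"
| seq_prog: "step (Prog p) \<sigma> t (Prog p') \<sigma>' t' \<Longrightarrow>
     step (Prog (Seq p q)) \<sigma> t (Prog (Seq p' q)) \<sigma>' t'"

end

theory Submission
  imports Defs
begin

text \<open>Stop is excluded because ode_stop resets the remaining time to 0; every other rule
  either leaves the time unchanged or subtracts a duration from it.\<close>

lemma step_time_shift:
  assumes "step c \<sigma> t c' \<sigma>' t'" and "c' \<noteq> Stop" and "s \<ge> 0"
  shows "step c \<sigma> (t + s) c' \<sigma>' (t' + s)"
  using assms
proof (induction rule: step.induct)
  case (ode_skip t u \<sigma> F)
  then have "step (Prog (Ode F u)) \<sigma> (t + s) Skip (ode_sol F \<sigma> (leval u \<sigma>)) (t + s - leval u \<sigma>)"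
    by (intro step.ode_skip) simp
  then show ?case
    by (simp add: algebra_simps)
qed (auto intro: step.intros)

theorem proposition1:
  fixes p q :: "'v::finite prog" and \<sigma> \<sigma>' :: "'v env" and t t' s :: real
  assumes "t \<ge> 0" and "t' \<ge> 0" and "s \<ge> 0"
  shows "(step (Prog p) \<sigma> t (Prog q) \<sigma>' t' \<longrightarrow> step (Prog p) \<sigma> (t + s) (Prog q) \<sigma>' (t' + s))
       \<and> (step (Prog p) \<sigma> t Skip \<sigma>' t' \<longrightarrow> step (Prog p) \<sigma> (t + s) Skip \<sigma>' (t' + s))"
  using step_time_shift \<open>s \<ge> 0\<close> by blast

end
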